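(* Let $x_0\in X^{b_0^\star}_{++}$ and let $\hat x^{x_0}$ be the unique mild solution of $x'(t)=Lx(t)-N\Phi x(t)$, $x(0)=x_0$ (i.e. $\hat x^{x_0}(t)=e^{tB}x_0$ with $B=L-N\Phi$). Then $\langle\hat x^{x_0}(t),b_0^\star\rangle=\langle x_0,b_0^\star\rangle e^{gt}$ for all $t\ge0$, where $g=(\lambda_0^\star-\rho)/\gamma$. In particular $\hat x^{x_0}(t)\in X^{b_0^\star}_{++}=\{f\in X:\langle f,b_0^\star\rangle>0\}$ for all $t\ge0$.
   Context: $X$ is either $L^p(D,\mu)$, $p\in[1,\infty)$, $\mu$ $\sigma$-finite, or $C(D)$ (sup-norm) for compact metric $D$ with Borel measure $\mu$; $X^\star$ dual, $\langle\cdot,\cdot\rangle$ pairing, $X^\star_{++}$ the functionals strictly positive on nonzero nonnegative elements. $L$ is closed, densely defined, generates a $C_0$-semigroup on $X$ preserving strict positivity; $L^\star$ its adjoint. $(Nz)(\theta)=\eta(\theta)z(\theta)$; $\eta,f:D\to(0,\infty)$ measurable; $\gamma\in(0,1)\cup(1,\infty)$; $\rho>0$. Assumptions: there exist $b_0^\star\in X^\star_{++}\cap D(L^\star)$, $\lambda_0^\star\in\mathbb R$ with $L^\star b_0^\star=\lambda_0^\star b_0^\star$; $\rho>\lambda_0^\star(1-\gamma)$; if $\gamma>1$, $(b_0^\star)^{1-\gamma}/f\in L^\infty$; if $X=C(D)$, $b_0^\star$ is a measure absolutely continuous w.r.t. $\mu$ with density denoted $b_0^\star$ and $b_0^\star,\eta,f\in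 C(D;(0,\infty))$; if $X=L^p$, $\eta,f\in L^\infty(D;(0,\infty))$, $\int_Df^{1/\gamma}(\eta b_0^\star)^{\frac{\gamma-1}{\gamma}}d\mu<\infty$ and $\int_D(f/(\eta b_0^\star))^{p/\gamma}d\mu<\infty$. $\alpha=\gamma^\gamma\big(\int_Df^{1/\gamma}(\eta b_0^\star)^{\frac{\gamma-1}{\gamma}}d\mu/(\rho-\lambda_0^\star(1-\gamma))\big)^\gamma$; $[\Phi x](\theta)=\big(\frac{f(\theta)}{\alpha\eta(\theta)b_0^\star(\theta)}\big)^{1/\gamma}\langle x,b_0^\star\rangle$. *)

theory Defs
  imports "HOL-Analysis.Analysis" "HOL-Probability.Probability"
begin

text \<open>The two function-space settings of the paper: X = L^p(D,mu) (p in [1,oo)),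
  or X = C(D) for a compact metric space (D,d).  D is always the space of the measure M.\<close>
datatype 'd space_kind = Lp real | Cont "'d \<Rightarrow> 'd \<Rightarrow> real"

definition ctop :: "'d measure \<Rightarrow> ('d \<Rightarrow> 'd \<Rightarrow> real) \<Rightarrow> 'd topology" where
  "ctop M d = Metric_space.mtopology (space M) d"

definition eq_fn :: "'d space_kind \<Rightarrow> 'd measure \<Rightarrow> ('d \<Rightarrow> real) \<Rightarrow> ('d \<Rightarrow> real) \<Rightarrow> bool" where
  "eq_fn k M g h = (case k of Lp p \<Rightarrow> (AE \<theta> in M. g \<theta> = h \<theta>)
                            | Cont d \<Rightarrow> (\<forall>\<theta>\<in>space M. g \<theta> = h \<theta>))"

definition nonneg_fn :: "'d space_kind \<Rightarrow> 'd measure \<Rightarrow> ('d \<Rightarrow> real) \<Rightarrow> bool" where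
  "nonneg_fn k M g = (case k of Lp p \<Rightarrow> (AE \<theta> in M. 0 \<le> g \<theta>)
                            | Cont d \<Rightarrow> (\<forall>\<theta>\<in>space M. 0 \<le> g \<theta>))"

definition strictpos_fn :: "'d space_kind \<Rightarrow> 'd measure \<Rightarrow> ('d \<Rightarrow> real) \<Rightarrow> bool" where
  "strictpos_fn k M g = (case k of Lp p \<Rightarrow> (AE \<theta> in M. 0 < g \<theta>)
                            | Cont d \<Rightarrow> (\<forall>\<theta>\<in>space M. 0 < g \<theta>))"

text \<open>The (real) Banach space type 'x is (isometrically) the space X; rep x is a representative
  function of the element x (chosen linearly).\<close>
definition function_space_model :: "'d space_kind \<Rightarrow> 'd measure \<Rightarrow> ('x::banach \<Rightarrow> 'd \<Rightarrow> real) \<Rightarrow> bool" where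
  "function_space_model k M rep =
    ((\<forall>x y \<theta>. rep (x + y) \<theta> = rep x \<theta> + rep y \<theta>) \<and>
     (\<forall>c x \<theta>. rep (c *\<^sub>R x) \<theta> = c * rep x \<theta>) \<and>
     (case k of
        Lp p \<Rightarrow> 1 \<le> p \<and> sigma_finite_measure M \<and>
          (\<forall>x. rep x \<in> borel_measurable M \<and> integrable M (\<lambda>\<theta>. \<bar>rep x \<theta>\<bar> powr p) \<and>
               norm x = (\<integral>\<theta>. \<bar>rep x \<theta>\<bar> powr p \<partial>M) powr (1/p)) \<and>
          (\<forall>g \<in> borel_measurable M. integrable M (\<lambda>\<theta>. \<bar>g \<theta>\<bar> powr p) \<longrightarrow>
               (\<exists>x. AE \<theta> in M. rep x \<theta> = g \<theta>))
      | Cont d \<Rightarrow> Metric_space (space M) d \<and> compact_space (ctop M d) \<and>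
          sets M = sigma_sets (space M) {U. openin (ctop M d) U} \<and>
          (\<forall>x. continuous_map (ctop M d) euclideanreal (rep x) \<and>
               norm x = (SUP \<theta>\<in>space M. \<bar>rep x \<theta>\<bar>)) \<and>
          (\<forall>g. continuous_map (ctop M d) euclideanreal g \<longrightarrow> (\<exists>x. \<forall>\<theta>\<in>space M. rep x \<theta> = g \<theta>))))"

definition c0_semigroup :: "(real \<Rightarrow> 'x::real_normed_vector \<Rightarrow> 'x) \<Rightarrow> bool" where
  "c0_semigroup T =
    ((\<forall>t\<ge>0. bounded_linear (T t)) \<and> (\<forall>x. T 0 x = x) \<and>
     (\<forall>s\<ge>0. \<forall>t\<ge>0. \<forall>x. T (s + t) x = T s (T t x)) \<and>
     (\<forall>x. ((\<lambda>t. T t x) \<longlongrightarrow> x) (at_right 0)))"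

definition is_generator :: "(real \<Rightarrow> 'x::real_normed_vector \<Rightarrow> 'x) \<Rightarrow> 'x set \<Rightarrow> ('x \<Rightarrow> 'x) \<Rightarrow> bool" where
  "is_generator T Dom A =
    (Dom = {x. \<exists>y. ((\<lambda>h. (1/h) *\<^sub>R (T h x - x)) \<longlongrightarrow> y) (at_right 0)} \<and>
     (\<forall>x\<in>Dom. ((\<lambda>h. (1/h) *\<^sub>R (T h x - x)) \<longlongrightarrow> A x) (at_right 0)))"

definition strictly_positive_functional ::
  "'d space_kind \<Rightarrow> 'd measure \<Rightarrow> ('x::real_normed_vector \<Rightarrow> 'd \<Rightarrow> real) \<Rightarrow> ('x \<Rightarrow> real) \<Rightarrow> bool" where
  "strictly_positive_functional k M rep b =
    (bounded_linear b \<and> (\<forall>x. nonneg_fn k M (rep x) \<and> x \<noteq> 0 \<longrightarrow> 0 < b x))"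

text \<open>The constant alpha of the paper (b0 denotes the density of the functional b0*).\<close>
definition alpha_const :: "'d measure \<Rightarrow> ('d \<Rightarrow> real) \<Rightarrow> ('d \<Rightarrow> real) \<Rightarrow> ('d \<Rightarrow> real)
     \<Rightarrow> real \<Rightarrow> real \<Rightarrow> real \<Rightarrow> real" where
  "alpha_const M \<eta> f bd \<gamma> \<rho> lam0 =
     \<gamma> powr \<gamma> * ((\<integral>\<theta>. f \<theta> powr (1/\<gamma>) * (\<eta> \<theta> * bd \<theta>) powr ((\<gamma> - 1)/\<gamma>) \<partial>M)
                 / (\<rho> - lam0 * (1 - \<gamma>))) powr \<gamma>"

end

theory Submission
  imports Defs
begin

text \<open>Pair the solution with b0: \<psi> t = b0 (S t x0). Since b0 is an eigenfunctional of L and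
  N (\<Phi> y) is b0 y times a fixed function, b0 is also an eigenfunctional of the generator
  L - N \<circ> \<Phi> of S; the constant \<alpha> is chosen exactly so that the eigenvalue is
  g = (lam0 - \<rho>) / \<gamma>. For a C0 semigroup the integral of an orbit over [0, h] lies in the domain
  of the generator, which maps it to S h x0 - x0. Applying b0 turns this into the integral
  equation \<psi> h = \<psi> 0 + g * (integral of \<psi> over [0, h]), whose continuous solutions are
  \<psi> 0 * exp (g * h). Continuity of orbits comes from local boundedness of the semigroup,
  i.e. from the uniform boundedness principle.\<close>

lemma uniform_boundedness_on_ball:
  fixes T :: "'i \<Rightarrow> 'a::banach \<Rightarrow> 'b::real_normed_vector"
  assumes lin: "\<And>n. bounded_linear (T n)"
    and pointwise: "\<And>x. \<exists>B. \<forall>n. norm (T n x) \<le> B"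
  obtains x0 r K where "r > 0" "\<And>n x. x \<in> ball x0 r \<Longrightarrow> norm (T n x) \<le> K"
proof -
  define F where "F k = {x. \<forall>n. norm (T n x) \<le> real k}" for k :: nat
  have closed: "closed (F k)" for k
  proof -
    have "F k = (\<Inter>n. {x. norm (T n x) \<le> real k})" by (auto simp: F_def)
    moreover have "closed {x. norm (T n x) \<le> real k}" for n
      by (intro closed_Collect_le continuous_intros linear_continuous_on[OF lin])
    ultimately show ?thesis by (simp add: closed_INT)
  qed
  have "x \<in> \<Union>(range F)" for x
  proof -
    obtain B where B: "\<forall>n. norm (T n x) \<le> B" using pointwise by blast
    have "x \<in> F (nat \<lceil>B\<rceil>)"
      unfolding F_def using B by (blast intro: order_trans[OF _ real_nat_ceiling_ge])
    then show ?thesis by blast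
  qed
  then have cover: "\<Union>(range F) = UNIV" by blast
  have "\<exists>k. interior (F k) \<noteq> {}"
  proof (rule ccontr)
    assume "\<not> ?thesis"
    then have "euclidean interior_of \<Union>(range F) = {}"
      by (intro Baire_category_alt) (auto simp: completely_metrizable_space_euclidean closed)
    then show False using cover by simp
  qed
  then obtain k x0 where "x0 \<in> interior (F k)" by blast
  then obtain r where "r > 0" and ball: "ball x0 r \<subseteq> F k" by (meson mem_interior)
  moreover have "norm (T n x) \<le> real k" if "x \<in> ball x0 r" for n x
    using ball that unfolding F_def by blast
  ultimately show ?thesis using that by blast
qed

theorem uniform_boundedness_principle:
  fixes T :: "'i \<Rightarrow> 'a::banach \<Rightarrow> 'b::real_normed_vector"
  assumes lin: "\<And>n. bounded_linear (T n)"
    and pointwise: "\<And>x. \<exists>B. \<forall>n. norm (T n x) \<le> B"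
  shows "\<exists>C. \<forall>n x. norm (T n x) \<le> C * norm x"
proof -
  obtain x0 r K where r: "r > 0" and K: "\<And>n x. x \<in> ball x0 r \<Longrightarrow> norm (T n x) \<le> K"
    using uniform_boundedness_on_ball[OF lin pointwise] by metis
  have "norm (T n z) \<le> (4 * K / r) * norm z" for n z
  proof (cases "z = 0")
    case True
    then show ?thesis using linear_0[OF bounded_linear.linear[OF lin]] by simp
  next
    case False
    define w where "w = (r / (2 * norm z)) *\<^sub>R z"
    have "norm w = r / 2" using False r by (simp add: w_def)
    then have "x0 + w \<in> ball x0 r" "x0 \<in> ball x0 r" using r by (simp_all add: dist_norm)
    then have "norm (T n (x0 + w)) \<le> K" "norm (T n x0) \<le> K" by (simp_all only: K)
    moreover have "T n w = T n (x0 + w) - T n x0" by (simp add: linear_simps lin)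
    ultimately have Tw: "norm (T n w) \<le> 2 * K"
      using norm_triangle_ineq4[of "T n (x0 + w)" "T n x0"] by simp
    have "T n z = (2 * norm z / r) *\<^sub>R T n w"
      using r False by (simp add: w_def linear_simps lin)
    then have "norm (T n z) = (2 * norm z / r) * norm (T n w)" using r by simp
    also have "\<dots> \<le> (2 * norm z / r) * (2 * K)" using Tw r by (intro mult_left_mono) simp_all
    finally show ?thesis by (simp add: field_simps)
  qed
  then show ?thesis by blast
qed

lemma c0_semigroup_bounded_linear: "c0_semigroup S \<Longrightarrow> 0 \<le> t \<Longrightarrow> bounded_linear (S t)"
  by (simp add: c0_semigroup_def)

lemma c0_semigroup_0 [simp]: "c0_semigroup S \<Longrightarrow> S 0 x = x"
  by (simp add: c0_semigroup_def)

lemma c0_semigroup_add: "c0_semigroup S \<Longrightarrow> 0 \<le> s \<Longrightarrow> 0 \<le> t \<Longrightarrow> S (s + t) x = S s (S t x)"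
  by (simp add: c0_semigroup_def)

lemma c0_semigroup_tendsto_0: "c0_semigroup S \<Longrightarrow> ((\<lambda>t. S t x) \<longlongrightarrow> x) (at_right 0)"
  by (simp add: c0_semigroup_def)

lemma c0_semigroup_bounded_near_0:
  fixes S :: "real \<Rightarrow> 'a::banach \<Rightarrow> 'a"
  assumes S: "c0_semigroup S"
  obtains \<delta> C where "\<delta> > 0" "C \<ge> 1" "\<And>t x. 0 \<le> t \<Longrightarrow> t \<le> \<delta> \<Longrightarrow> norm (S t x) \<le> C * norm x"
proof -
  txt \<open>Otherwise some t n \<le> 1 / (n + 1) has operator norm above n + 1; but S (t n) x \<longrightarrow> x for
    every x, so the uniform boundedness principle bounds all S (t n) by one constant.\<close>
  have "\<exists>\<delta>>0. \<exists>C\<ge>1. \<forall>t x. 0 < t \<and> t \<le> \<delta> \<longrightarrow> norm (S t x) \<le> C * norm x"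
  proof (rule ccontr)
    assume "\<not> ?thesis"
    then have "\<forall>\<delta>>0. \<forall>C\<ge>1. \<exists>t x. 0 < t \<and> t \<le> \<delta> \<and> norm (S t x) > C * norm x"
      by (simp add: not_le) (meson not_less)
    then have "\<forall>n::nat. \<exists>t x. 0 < t \<and> t \<le> 1 / (real n + 1) \<and> norm (S t x) > (real n + 1) * norm x"
      by simp
    then obtain t xs where t: "\<And>n. 0 < t n" "\<And>n. t n \<le> 1 / (real n + 1)"
      and xs: "\<And>n. norm (S (t n) (xs n)) > (real n + 1) * norm (xs n)"
      by metis
    have "t \<longlonglongrightarrow> 0"
    proof (rule tendsto_sandwich[of "\<lambda>_. 0" _ _ "\<lambda>n. 1 / (real n + 1)"])
      show "(\<lambda>n. 1 / (real n + 1)) \<longlonglongrightarrow> 0"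
        using LIMSEQ_inverse_real_of_nat_add[of 0] by (simp add: inverse_eq_divide add.commute)
    qed (use t in \<open>simp_all add: less_imp_le\<close>)
    then have "filterlim t (at_right 0) sequentially"
      unfolding filterlim_at using t(1) by (auto intro!: always_eventually simp: less_imp_neq[symmetric])
    then have "(\<lambda>n. S (t n) x) \<longlonglongrightarrow> x" for x
      by (rule filterlim_compose[OF c0_semigroup_tendsto_0[OF S]])
    then have "\<exists>B. \<forall>n. norm (S (t n) x) \<le> B" for x
      by (meson bounded_iff convergent_imp_bounded rangeI)
    then obtain C where C: "\<And>n x. norm (S (t n) x) \<le> C * norm x"
      using uniform_boundedness_principle[of "\<lambda>n. S (t n)"]
        c0_semigroup_bounded_linear[OF S less_imp_le[OF t(1)]] by metis
    obtain n :: nat where "C \<le> real n" using real_arch_simple by blast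
    then have "norm (S (t n) (xs n)) \<le> (real n + 1) * norm (xs n)"
      using C[of n "xs n"] by (smt (verit) mult_right_mono norm_ge_zero)
    then show False using xs[of n] by simp
  qed
  then obtain \<delta> C where \<delta>: "\<delta> > 0" and C: "C \<ge> 1"
    and bound: "\<And>t x. 0 < t \<Longrightarrow> t \<le> \<delta> \<Longrightarrow> norm (S t x) \<le> C * norm x"
    by blast
  have "norm (S t x) \<le> C * norm x" if "0 \<le> t" "t \<le> \<delta>" for t x
  proof (cases "t = 0")
    case True
    then show ?thesis using S C by (simp add: mult_le_cancel_right1)
  next
    case False
    then show ?thesis using bound that by simp
  qed
  then show ?thesis by (rule that[OF \<delta> C])
qed

lemma c0_semigroup_bounded_on_interval:
  fixes S :: "real \<Rightarrow> 'a::banach \<Rightarrow> 'a"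
  assumes S: "c0_semigroup S"
  obtains K where "K > 0" "\<And>t x. 0 \<le> t \<Longrightarrow> t \<le> T \<Longrightarrow> norm (S t x) \<le> K * norm x"
proof -
  obtain \<delta> C where \<delta>: "\<delta> > 0" and C: "C \<ge> 1"
    and bound: "\<And>t x. 0 \<le> t \<Longrightarrow> t \<le> \<delta> \<Longrightarrow> norm (S t x) \<le> C * norm x"
    using c0_semigroup_bounded_near_0[OF S] by metis
  have power_bound: "norm (S t x) \<le> C ^ n * norm x" if "0 \<le> t" "t \<le> real n * \<delta>" for n t x
    using that
  proof (induction n arbitrary: t)
    case 0
    then show ?case using S by simp
  next
    case (Suc n)
    show ?case
    proof (cases "t \<le> \<delta>")
      case True
      have "C * norm x \<le> C ^ Suc n * norm x"
        using C power_increasing[of 1 "Suc n" C] by (intro mult_right_mono) simp_all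
      then show ?thesis using bound[of t x] Suc.prems True by linarith
    next
      case False
      have "S t x = S \<delta> (S (t - \<delta>) x)" using c0_semigroup_add[OF S, of \<delta> "t - \<delta>"] False \<delta> by simp
      also have "norm \<dots> \<le> C * norm (S (t - \<delta>) x)" using bound \<delta> by simp
      also have "\<dots> \<le> C * (C ^ n * norm x)"
        using Suc.IH Suc.prems False C by (intro mult_left_mono) (auto simp: algebra_simps)
      finally show ?thesis by simp
    qed
  qed
  obtain n :: nat where "T / \<delta> \<le> real n" using real_arch_simple by blast
  then have "T \<le> real n * \<delta>" using \<delta> by (simp add: field_simps)
  then have "norm (S t x) \<le> C ^ n * norm x" if "0 \<le> t" "t \<le> T" for t x
    using power_bound that by simp
  moreover have "C ^ n > 0" using C by simp
  ultimately show ?thesis using that by blast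
qed

lemma c0_semigroup_continuous_orbit:
  fixes S :: "real \<Rightarrow> 'a::banach \<Rightarrow> 'a"
  assumes S: "c0_semigroup S"
  shows "continuous_on {0..} (\<lambda>t. S t x)"
  unfolding continuous_on_iff
proof (intro ballI allI impI)
  fix t0 e :: real
  assume t0: "t0 \<in> {0..}" and e: "0 < e"
  obtain K where K: "K > 0" "\<And>t x. 0 \<le> t \<Longrightarrow> t \<le> t0 + 1 \<Longrightarrow> norm (S t x) \<le> K * norm x"
    using c0_semigroup_bounded_on_interval[OF S] by metis
  have "\<forall>\<^sub>F h in at_right 0. dist (S h x) x < e / K"
    using c0_semigroup_tendsto_0[OF S] e K(1) by (simp add: tendsto_iff)
  then obtain d where d: "d > 0" "\<And>h. 0 < h \<Longrightarrow> h < d \<Longrightarrow> dist (S h x) x < e / K"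
    by (auto simp: eventually_at_right_field)
  have step: "dist (S (s + h) x) (S s x) < e" if "0 \<le> s" "s \<le> t0 + 1" "0 < h" "h < d" for s h
  proof -
    have "S (s + h) x - S s x = S s (S h x - x)"
      using c0_semigroup_add[OF S, of s h] c0_semigroup_bounded_linear[OF S, of s] that
      by (simp add: linear_simps)
    then have "dist (S (s + h) x) (S s x) \<le> K * dist (S h x) x"
      using K(2) that by (simp add: dist_norm)
    also have "\<dots> < K * (e / K)" using d(2) that K(1) by (intro mult_strict_left_mono) simp_all
    finally show ?thesis using K(1) by simp
  qed
  show "\<exists>d>0. \<forall>t\<in>{0..}. dist t t0 < d \<longrightarrow> dist (S t x) (S t0 x) < e"
  proof (intro exI[of _ "min d 1"] conjI ballI impI)
    fix t :: real assume t: "t \<in> {0..}" "dist t t0 < min d 1"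
    consider "t = t0" | "t0 < t" | "t < t0" by linarith
    then show "dist (S t x) (S t0 x) < e"
    proof cases
      case 1
      then show ?thesis using e by simp
    next
      case 2
      then show ?thesis using step[of t0 "t - t0"] t0 t by (simp add: dist_real_def)
    next
      case 3
      then show ?thesis using step[of t "t0 - t"] t0 t by (simp add: dist_real_def dist_commute)
    qed
  qed (use d in simp)
qed

lemma has_vector_derivative_imp_right_quotient:
  fixes G :: "real \<Rightarrow> 'a::real_normed_vector"
  assumes G: "(G has_vector_derivative v) (at h within {a..b})" and h: "a \<le> h" "h < b"
  shows "((\<lambda>r. (1 / r) *\<^sub>R (G (h + r) - G h)) \<longlongrightarrow> v) (at_right 0)"
proof -
  have "((\<lambda>y. (1 / norm (y - h)) *\<^sub>R (G y - (G h + (y - h) *\<^sub>R v))) \<longlongrightarrow> 0) (at h within {a..b})"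
    using G by (simp add: has_vector_derivative_def has_derivative_within)
  moreover have "filterlim (\<lambda>r. h + r) (at h within {a..b}) (at_right 0)"
  proof (unfold filterlim_at, rule conjI)
    show "\<forall>\<^sub>F r in at_right 0. h + r \<in> {a..b} \<and> h + r \<noteq> h"
      unfolding eventually_at_right_field using h by (intro exI[of _ "b - h"]) auto
    show "((\<lambda>r. h + r) \<longlongrightarrow> h) (at_right 0)"
      by (auto intro!: tendsto_eq_intros)
  qed
  ultimately have "((\<lambda>r. (1 / norm r) *\<^sub>R (G (h + r) - (G h + r *\<^sub>R v))) \<longlongrightarrow> 0) (at_right 0)"
    using filterlim_compose by fastforce
  moreover have "\<forall>\<^sub>F r in at_right 0.
      (1 / norm r) *\<^sub>R (G (h + r) - (G h + r *\<^sub>R v)) = (1 / r) *\<^sub>R (G (h + r) - G h) - v"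
    unfolding eventually_at_right_field by (intro exI[of _ 1]) (auto simp: algebra_simps)
  ultimately have "((\<lambda>r. (1 / r) *\<^sub>R (G (h + r) - G h) - v) \<longlongrightarrow> 0) (at_right 0)"
    using Lim_transform_eventually by fastforce
  then show ?thesis by (simp add: LIM_zero_iff)
qed

lemma c0_semigroup_orbit_integrable:
  fixes S :: "real \<Rightarrow> 'a::banach \<Rightarrow> 'a"
  assumes S: "c0_semigroup S" and a: "0 \<le> a"
  shows "(\<lambda>s. S s x) integrable_on {a..b}"
  by (intro integrable_continuous_interval continuous_on_subset[OF c0_semigroup_continuous_orbit[OF S]])
    (use a in auto)

lemma c0_semigroup_apply_orbit_integral:
  fixes S :: "real \<Rightarrow> 'a::banach \<Rightarrow> 'a"
  assumes S: "c0_semigroup S" and r: "0 \<le> r" and h: "0 \<le> h"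
  shows "S r (integral {0..h} (\<lambda>s. S s x))
           = integral {0..h + r} (\<lambda>s. S s x) - integral {0..r} (\<lambda>s. S s x)"
proof -
  have "S r (integral {0..h} (\<lambda>s. S s x)) = integral {0..h} (\<lambda>s. S r (S s x))"
    using integral_linear[OF c0_semigroup_orbit_integrable[OF S, of 0]
        c0_semigroup_bounded_linear[OF S r]]
    by (simp add: o_def)
  also have "\<dots> = integral {0..h} (\<lambda>s. S (1 *\<^sub>R s + r) x)"
    using c0_semigroup_add[OF S r] by (intro integral_cong) (simp add: add.commute)
  also have "\<dots> = integral {r..h + r} (\<lambda>s. S s x)"
  proof -
    have "((\<lambda>s. S s x) has_integral integral {r..h + r} (\<lambda>s. S s x)) (cbox r (h + r))"
      using c0_semigroup_orbit_integrable[OF S r] by (simp add: integrable_integral)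
    from has_integral_affinity'[OF this, of 1 r] show ?thesis by (simp add: integral_unique)
  qed
  also have "\<dots> = integral {0..h + r} (\<lambda>s. S s x) - integral {0..r} (\<lambda>s. S s x)"
    using Henstock_Kurzweil_Integration.integral_combine
        [where a=0 and c=r and b="h + r" and f="\<lambda>s. S s x"]
      c0_semigroup_orbit_integrable[OF S, where a=0 and b="h + r"] r h
    by (simp add: eq_diff_eq add.commute)
  finally show ?thesis .
qed

lemma c0_semigroup_orbit_integral_generator:
  fixes S :: "real \<Rightarrow> 'a::banach \<Rightarrow> 'a"
  assumes S: "c0_semigroup S" and gen: "is_generator S Dom A" and h: "0 \<le> h"
  shows "integral {0..h} (\<lambda>s. S s x) \<in> Dom"
    and "A (integral {0..h} (\<lambda>s. S s x)) = S h x - x"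
proof -
  define G where "G u = integral {0..u} (\<lambda>s. S s x)" for u
  have G_deriv: "((\<lambda>r. (1 / r) *\<^sub>R (G (u + r) - G u)) \<longlongrightarrow> S u x) (at_right 0)" if "0 \<le> u" for u
    unfolding G_def using that
    by (intro has_vector_derivative_imp_right_quotient[of _ _ _ 0 "u + 1"] integral_has_vector_derivative
        continuous_on_subset[OF c0_semigroup_continuous_orbit[OF S]]) auto
  have "((\<lambda>r. (1 / r) *\<^sub>R (G (h + r) - G h) - (1 / r) *\<^sub>R (G (0 + r) - G 0)) \<longlongrightarrow> S h x - x)
      (at_right 0)"
    using tendsto_diff[OF G_deriv[OF h] G_deriv[of 0]] S by simp
  moreover have "\<forall>\<^sub>F r in at_right 0. (1 / r) *\<^sub>R (G (h + r) - G h) - (1 / r) *\<^sub>R (G (0 + r) - G 0)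
      = (1 / r) *\<^sub>R (S r (G h) - G h)"
    unfolding eventually_at_right_field
    by (intro exI[of _ 1]) (auto simp: G_def c0_semigroup_apply_orbit_integral[OF S _ h] algebra_simps)
  ultimately have quotient: "((\<lambda>r. (1 / r) *\<^sub>R (S r (G h) - G h)) \<longlongrightarrow> S h x - x) (at_right 0)"
    by (rule Lim_transform_eventually)
  then show "G h \<in> Dom" using gen unfolding is_generator_def by blast
  then have "((\<lambda>r. (1 / r) *\<^sub>R (S r (G h) - G h)) \<longlongrightarrow> A (G h)) (at_right 0)"
    using gen unfolding is_generator_def by blast
  then show "A (G h) = S h x - x"
    using quotient tendsto_unique[OF trivial_limit_at_right_real] by blast
qed

lemma integral_equation_imp_exp:
  fixes \<psi> :: "real \<Rightarrow> real"
  assumes cont: "continuous_on {0..} \<psi>"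
    and eq: "\<And>h. 0 \<le> h \<Longrightarrow> \<psi> h = \<psi> 0 + g * integral {0..h} \<psi>"
    and t: "0 \<le> t"
  shows "\<psi> t = \<psi> 0 * exp (g * t)"
proof -
  have cont_t: "continuous_on {0..t} \<psi>" by (rule continuous_on_subset[OF cont]) auto
  have \<psi>_deriv: "(\<psi> has_real_derivative g * \<psi> u) (at u within {0..t})" if u: "u \<in> {0..t}" for u
  proof -
    have "((\<lambda>h. \<psi> 0 + g * integral {0..h} \<psi>) has_real_derivative g * \<psi> u) (at u within {0..t})"
      using integral_has_real_derivative[OF cont_t u] by (auto intro!: derivative_eq_intros)
    then show ?thesis
    proof (rule has_field_derivative_transform_within[where d=1])
      show "\<psi> 0 + g * integral {0..v} \<psi> = \<psi> v" if "v \<in> {0..t}" for v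
        using eq[of v] that by simp
    qed (use u in auto)
  qed
  define \<phi> where "\<phi> u = \<psi> u * exp (- g * u)" for u
  have "(\<phi> has_real_derivative 0) (at u within {0..t})" if "u \<in> {0..t}" for u
  proof -
    have "((\<lambda>u. exp (- g * u)) has_real_derivative exp (- g * u) * (- g)) (at u within {0..t})"
      by (auto intro!: derivative_eq_intros)
    from DERIV_mult[OF \<psi>_deriv[OF that] this] show ?thesis
      unfolding \<phi>_def by (simp add: algebra_simps)
  qed
  then have "\<phi> t = \<phi> 0"
    using has_field_derivative_zero_constant[of "{0..t}" \<phi>] t
    by (metis atLeastAtMost_iff convex_real_interval(5) order_refl)
  then have "\<psi> t * exp (- g * t) * exp (g * t) = \<psi> 0 * exp (g * t)" by (simp add: \<phi>_def)
  then show ?thesis by (simp add: mult.assoc exp_add[symmetric])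
qed

theorem c0_semigroup_eigenfunctional:
  fixes S :: "real \<Rightarrow> 'a::banach \<Rightarrow> 'a"
  assumes S: "c0_semigroup S" and gen: "is_generator S Dom A" and b: "bounded_linear b"
    and eigen: "\<And>y. y \<in> Dom \<Longrightarrow> b (A y) = g * b y"
    and t: "0 \<le> t"
  shows "b (S t x) = b x * exp (g * t)"
proof -
  have cont: "continuous_on {0..} (\<lambda>t. b (S t x))"
    using continuous_on_compose[OF c0_semigroup_continuous_orbit[OF S] linear_continuous_on[OF b]]
    by (simp add: o_def)
  have "b (S h x) = b (S 0 x) + g * integral {0..h} (\<lambda>s. b (S s x))" if h: "0 \<le> h" for h
  proof -
    have "integral {0..h} (\<lambda>s. b (S s x)) = b (integral {0..h} (\<lambda>s. S s x))"
      using integral_linear[OF c0_semigroup_orbit_integrable[OF S order_refl] b] by (simp add: o_def)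
    moreover have "b (S h x) - b x = g * b (integral {0..h} (\<lambda>s. S s x))"
      using eigen[OF c0_semigroup_orbit_integral_generator(1)[OF S gen h, of x]]
        c0_semigroup_orbit_integral_generator(2)[OF S gen h, of x]
      by (simp add: linear_diff[OF bounded_linear.linear[OF b]])
    ultimately show ?thesis using S by simp
  qed
  from integral_equation_imp_exp[OF cont this t] S show ?thesis by simp
qed

lemma (in sigma_finite_measure) null_sets_if_finite_subsets_null:
  assumes A: "A \<in> sets M"
    and finite_null: "\<And>E. E \<in> sets M \<Longrightarrow> E \<subseteq> A \<Longrightarrow> emeasure M E < \<infinity> \<Longrightarrow> E \<in> null_sets M"
  shows "A \<in> null_sets M"
proof -
  obtain C :: "nat \<Rightarrow> 'a set" where C: "range C \<subseteq> sets M" "(\<Union>i. C i) = space M"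
    "\<And>i. emeasure M (C i) \<noteq> \<infinity>"
    using sigma_finite by metis
  have "emeasure M (A \<inter> C i) < \<infinity>" for i
  proof -
    have "emeasure M (A \<inter> C i) \<le> emeasure M (C i)"
      using C(1) by (intro emeasure_mono) auto
    then show ?thesis using C(3)[of i] by (simp add: less_top order.strict_trans1)
  qed
  then have "A \<inter> C i \<in> null_sets M" for i
    using A C(1) by (intro finite_null) auto
  moreover have "A = (\<Union>i. A \<inter> C i)" using C(2) sets.sets_into_space[OF A] by blast
  ultimately show ?thesis by (metis null_sets_UN)
qed

lemma Lp_density_nonneg:
  fixes rep :: "'x::banach \<Rightarrow> 'd \<Rightarrow> real"
  assumes model: "function_space_model (Lp p) M rep"
    and b_pos: "strictly_positive_functional (Lp p) M rep b"
    and bd: "bd \<in> borel_measurable M" "\<And>x. b x = (\<integral>\<theta>. rep x \<theta> * bd \<theta> \<partial>M)"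
  shows "AE \<theta> in M. 0 \<le> bd \<theta>"
proof -
  from model have "sigma_finite_measure M"
    and surj: "\<And>g. g \<in> borel_measurable M \<Longrightarrow> integrable M (\<lambda>\<theta>. \<bar>g \<theta>\<bar> powr p) \<Longrightarrow>
                 \<exists>x. AE \<theta> in M. rep x \<theta> = g \<theta>"
    and rep_scaleR: "\<And>c x \<theta>. rep (c *\<^sub>R x) \<theta> = c * rep x \<theta>"
    and rep_meas: "\<And>x. rep x \<in> borel_measurable M"
    unfolding function_space_model_def by auto
  txt \<open>Pairing b with the indicator of a non-null, finite-measure part of {bd < 0} would give a
    strictly positive number that is an integral of a nonpositive function.\<close>
  define A where "A = {\<theta>\<in>space M. bd \<theta> < 0}"
  have A_sets: "A \<in> sets M" unfolding A_def using bd(1) by measurable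
  have "E \<in> null_sets M" if E: "E \<in> sets M" "E \<subseteq> A" "emeasure M E < \<infinity>" for E
  proof (rule ccontr)
    assume not_null: "E \<notin> null_sets M"
    have "(\<lambda>\<theta>. \<bar>indicator E \<theta> :: real\<bar> powr p) = indicator E"
      by (auto simp: fun_eq_iff indicator_def)
    then obtain x where x: "AE \<theta> in M. rep x \<theta> = indicator E \<theta>"
      using surj[of "indicator E"] E by auto
    have "x \<noteq> 0"
    proof
      assume "x = 0"
      then have rep0: "rep x \<theta> = 0" for \<theta> using rep_scaleR[of 0 x \<theta>] by simp
      have "AE \<theta> in M. \<theta> \<notin> E" using x by eventually_elim (simp add: rep0 indicator_def)
      then show False using not_null AE_iff_null_sets[OF E(1)] by simp
    qed
    moreover have "AE \<theta> in M. 0 \<le> rep x \<theta>"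
      using x by eventually_elim simp
    ultimately have "0 < b x" using b_pos by (simp add: strictly_positive_functional_def nonneg_fn_def)
    also have "b x = (\<integral>\<theta>. indicator E \<theta> * bd \<theta> \<partial>M)"
      unfolding bd(2) using x rep_meas[of x] bd(1) E(1)
      by (intro integral_cong_AE) (auto elim!: AE_mp)
    also have "\<dots> \<le> 0"
    proof -
      have "0 \<le> (\<integral>\<theta>. - (indicator E \<theta> * bd \<theta>) \<partial>M)"
        using E(2) by (intro Bochner_Integration.integral_nonneg) (auto simp: indicator_def A_def)
      then show ?thesis by simp
    qed
    finally show False by simp
  qed
  then have "A \<in> null_sets M"
    by (intro sigma_finite_measure.null_sets_if_finite_subsets_null[OF \<open>sigma_finite_measure M\<close> A_sets])
  then have "AE \<theta> in M. \<theta> \<notin> A" using AE_iff_null_sets[OF A_sets] by simp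
  with AE_space show ?thesis by eventually_elim (auto simp: A_def)
qed

lemma eq_fn_mult_subst:
  assumes "eq_fn k M g (\<lambda>\<theta>. a \<theta> * h \<theta>)" and "eq_fn k M h h'"
  shows "eq_fn k M g (\<lambda>\<theta>. a \<theta> * h' \<theta>)"
proof (cases k)
  case (Lp p)
  with assms show ?thesis unfolding eq_fn_def by (auto elim: AE_mp)
next
  case (Cont d)
  with assms show ?thesis unfolding eq_fn_def by simp
qed

lemma integral_eq_fn_cong:
  assumes model: "function_space_model k M rep" and eq: "eq_fn k M (rep x) h"
    and meas: "h \<in> borel_measurable M" "w \<in> borel_measurable M"
  shows "(\<integral>\<theta>. rep x \<theta> * w \<theta> \<partial>M) = (\<integral>\<theta>. h \<theta> * w \<theta> \<partial>M)"
proof (cases k)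
  case (Lp p)
  then have "rep x \<in> borel_measurable M" using model by (simp add: function_space_model_def)
  with Lp eq meas show ?thesis unfolding eq_fn_def by (intro integral_cong_AE) (auto elim: AE_mp)
next
  case (Cont d)
  with eq show ?thesis unfolding eq_fn_def by (intro Bochner_Integration.integral_cong) auto
qed

lemma weighted_root_identity:
  fixes a e b \<alpha> \<gamma> :: real
  assumes "0 < a" "0 < e" "0 \<le> b" "0 < \<alpha>" "\<gamma> \<noteq> 0"
  shows "e * (a / (\<alpha> * e * b)) powr (1 / \<gamma>) * b
           = a powr (1 / \<gamma>) * (e * b) powr ((\<gamma> - 1) / \<gamma>) / \<alpha> powr (1 / \<gamma>)"
proof (cases "b = 0")
  case False
  then have eb: "0 < e * b" using assms by simp
  have "(a / (\<alpha> * e * b)) powr (1 / \<gamma>) = a powr (1 / \<gamma>) / (\<alpha> powr (1 / \<gamma>) * (e * b) powr (1 / \<gamma>))"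
    using assms eb by (simp add: powr_divide powr_mult mult.assoc)
  moreover have "(e * b) powr ((\<gamma> - 1) / \<gamma>) = (e * b) / (e * b) powr (1 / \<gamma>)"
    using eb assms by (simp add: diff_divide_distrib powr_diff)
  ultimately show ?thesis using eb assms by (simp add: field_simps)
qed simp

lemma integral_weighted_root:
  fixes \<eta> f bd :: "'d \<Rightarrow> real"
  assumes meas: "\<eta> \<in> borel_measurable M" "f \<in> borel_measurable M" "bd \<in> borel_measurable M"
    and pos: "\<forall>\<theta>\<in>space M. 0 < \<eta> \<theta>" "\<forall>\<theta>\<in>space M. 0 < f \<theta>" "AE \<theta> in M. 0 \<le> bd \<theta>"
    and \<alpha>: "0 < \<alpha>" and \<gamma>: "\<gamma> \<noteq> 0"
  shows "(\<integral>\<theta>. \<eta> \<theta> * (f \<theta> / (\<alpha> * \<eta> \<theta> * bd \<theta>)) powr (1 / \<gamma>) * bd \<theta> \<partial>M)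
           = (\<integral>\<theta>. f \<theta> powr (1 / \<gamma>) * (\<eta> \<theta> * bd \<theta>) powr ((\<gamma> - 1) / \<gamma>) \<partial>M) / \<alpha> powr (1 / \<gamma>)"
proof -
  have "(\<integral>\<theta>. \<eta> \<theta> * (f \<theta> / (\<alpha> * \<eta> \<theta> * bd \<theta>)) powr (1 / \<gamma>) * bd \<theta> \<partial>M)
      = (\<integral>\<theta>. f \<theta> powr (1 / \<gamma>) * (\<eta> \<theta> * bd \<theta>) powr ((\<gamma> - 1) / \<gamma>) / \<alpha> powr (1 / \<gamma>) \<partial>M)"
    using pos(3) AE_space
  proof (intro integral_cong_AE)
    show "AE \<theta> in M. \<eta> \<theta> * (f \<theta> / (\<alpha> * \<eta> \<theta> * bd \<theta>)) powr (1 / \<gamma>) * bd \<theta>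
        = f \<theta> powr (1 / \<gamma>) * (\<eta> \<theta> * bd \<theta>) powr ((\<gamma> - 1) / \<gamma>) / \<alpha> powr (1 / \<gamma>)"
      using pos(3) AE_space
      by eventually_elim (use pos \<alpha> \<gamma> weighted_root_identity in auto)
  qed (use meas in measurable)
  then show ?thesis by simp
qed

lemma weighted_root_integral_pos:
  fixes \<eta> f bd :: "'d \<Rightarrow> real"
  assumes int: "integrable M (\<lambda>\<theta>. f \<theta> powr (1 / \<gamma>) * (\<eta> \<theta> * bd \<theta>) powr ((\<gamma> - 1) / \<gamma>))"
    and pos: "\<forall>\<theta>\<in>space M. 0 < \<eta> \<theta>" "\<forall>\<theta>\<in>space M. 0 < f \<theta>"
    and b: "\<And>x. b x = (\<integral>\<theta>. rep x \<theta> * bd \<theta> \<partial>M)" and x: "b x \<noteq> 0"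
  shows "0 < (\<integral>\<theta>. f \<theta> powr (1 / \<gamma>) * (\<eta> \<theta> * bd \<theta>) powr ((\<gamma> - 1) / \<gamma>) \<partial>M)"
proof -
  have "(\<integral>\<theta>. f \<theta> powr (1 / \<gamma>) * (\<eta> \<theta> * bd \<theta>) powr ((\<gamma> - 1) / \<gamma>) \<partial>M) \<noteq> 0"
  proof
    assume "(\<integral>\<theta>. f \<theta> powr (1 / \<gamma>) * (\<eta> \<theta> * bd \<theta>) powr ((\<gamma> - 1) / \<gamma>) \<partial>M) = 0"
    then have "AE \<theta> in M. f \<theta> powr (1 / \<gamma>) * (\<eta> \<theta> * bd \<theta>) powr ((\<gamma> - 1) / \<gamma>) = 0"
      using integral_nonneg_eq_0_iff_AE[OF int] by simp
    then have "AE \<theta> in M. rep x \<theta> * bd \<theta> = 0"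
      using AE_space by eventually_elim (use pos in auto)
    then have "b x = 0" unfolding b by (rule integral_eq_zero_AE)
    then show False using x by simp
  qed
  moreover have "0 \<le> (\<integral>\<theta>. f \<theta> powr (1 / \<gamma>) * (\<eta> \<theta> * bd \<theta>) powr ((\<gamma> - 1) / \<gamma>) \<partial>M)"
    by (intro Bochner_Integration.integral_nonneg) simp
  ultimately show ?thesis by linarith
qed

lemma alpha_const_root:
  assumes I: "0 < (\<integral>\<theta>. f \<theta> powr (1 / \<gamma>) * (\<eta> \<theta> * bd \<theta>) powr ((\<gamma> - 1) / \<gamma>) \<partial>M)"
    and \<gamma>: "0 < \<gamma>" and \<rho>: "lam0 * (1 - \<gamma>) < \<rho>"
  shows "0 < alpha_const M \<eta> f bd \<gamma> \<rho> lam0"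
    and "alpha_const M \<eta> f bd \<gamma> \<rho> lam0 powr (1 / \<gamma>)
           = \<gamma> * (\<integral>\<theta>. f \<theta> powr (1 / \<gamma>) * (\<eta> \<theta> * bd \<theta>) powr ((\<gamma> - 1) / \<gamma>) \<partial>M)
               / (\<rho> - lam0 * (1 - \<gamma>))"
  using I \<gamma> \<rho> by (simp_all add: alpha_const_def powr_mult powr_powr)

lemma density_functional_N_Phi:
  assumes model: "function_space_model k M rep"
    and b: "bd \<in> borel_measurable M" "\<And>x. b x = (\<integral>\<theta>. rep x \<theta> * bd \<theta> \<partial>M)"
      "AE \<theta> in M. 0 \<le> bd \<theta>"
    and \<eta>: "\<eta> \<in> borel_measurable M" "\<forall>\<theta>\<in>space M. 0 < \<eta> \<theta>"
    and f: "f \<in> borel_measurable M" "\<forall>\<theta>\<in>space M. 0 < f \<theta>"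
    and \<alpha>: "0 < \<alpha>" and \<gamma>: "\<gamma> \<noteq> 0"
    and N: "\<And>z. eq_fn k M (rep (N z)) (\<lambda>\<theta>. \<eta> \<theta> * rep z \<theta>)"
    and \<Phi>: "\<And>x. eq_fn k M (rep (\<Phi> x)) (\<lambda>\<theta>. (f \<theta> / (\<alpha> * \<eta> \<theta> * bd \<theta>)) powr (1 / \<gamma>) * b x)"
  shows "b (N (\<Phi> y))
           = b y * (\<integral>\<theta>. f \<theta> powr (1 / \<gamma>) * (\<eta> \<theta> * bd \<theta>) powr ((\<gamma> - 1) / \<gamma>) \<partial>M) / \<alpha> powr (1 / \<gamma>)"
proof -
  have "eq_fn k M (rep (N (\<Phi> y))) (\<lambda>\<theta>. \<eta> \<theta> * ((f \<theta> / (\<alpha> * \<eta> \<theta> * bd \<theta>)) powr (1 / \<gamma>) * b y))"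
    using eq_fn_mult_subst N \<Phi> by blast
  then have "b (N (\<Phi> y))
      = (\<integral>\<theta>. b y * (\<eta> \<theta> * (f \<theta> / (\<alpha> * \<eta> \<theta> * bd \<theta>)) powr (1 / \<gamma>) * bd \<theta>) \<partial>M)"
    unfolding b(2)[of "N (\<Phi> y)"] using integral_eq_fn_cong[OF model] \<eta>(1) f(1) b(1)
    by (simp add: ac_simps)
  also have "\<dots> = b y * (\<integral>\<theta>. f \<theta> powr (1 / \<gamma>) * (\<eta> \<theta> * bd \<theta>) powr ((\<gamma> - 1) / \<gamma>) \<partial>M)
      / \<alpha> powr (1 / \<gamma>)"
    using integral_weighted_root[OF \<eta>(1) f(1) b(1) \<eta>(2) f(2) b(3) \<alpha> \<gamma>] by simp
  finally show ?thesis .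
qed

theorem lemma3p7:
  fixes k :: "'d space_kind" and M :: "'d measure"
    and rep :: "'x::banach \<Rightarrow> 'd \<Rightarrow> real"
    and DomL :: "'x set" and L :: "'x \<Rightarrow> 'x"
    and \<eta> f bd :: "'d \<Rightarrow> real"
    and b0 :: "'x \<Rightarrow> real"
    and lam0 \<gamma> \<rho> :: real
    and N \<Phi> :: "'x \<Rightarrow> 'x"
    and S :: "real \<Rightarrow> 'x \<Rightarrow> 'x"
    and x0 :: 'x
  assumes model: "function_space_model k M rep"
    and L_gen: "\<exists>T. c0_semigroup T \<and> is_generator T DomL L \<and>
                 (\<forall>t\<ge>0. \<forall>x. strictpos_fn k M (rep x) \<longrightarrow> strictpos_fn k M (rep (T t x)))"
    and eta_meas: "\<eta> \<in> borel_measurable M" and eta_pos: "\<forall>\<theta>\<in>space M. 0 < \<eta> \<theta>"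
    and f_meas: "f \<in> borel_measurable M" and f_pos: "\<forall>\<theta>\<in>space M. 0 < f \<theta>"
    and gamma: "0 < \<gamma>" "\<gamma> \<noteq> 1"
    and rho: "0 < \<rho>"
    and b0_pos: "strictly_positive_functional k M rep b0"
    and b0_density: "bd \<in> borel_measurable M" "\<forall>x. b0 x = (\<integral>\<theta>. rep x \<theta> * bd \<theta> \<partial>M)"
    and b0_eigen: "\<forall>x\<in>DomL. b0 (L x) = lam0 * b0 x"
    and rho_big: "\<rho> > lam0 * (1 - \<gamma>)"
    and gamma_big: "\<gamma> > 1 \<longrightarrow> (\<exists>C. AE \<theta> in M. \<bar>bd \<theta> powr (1 - \<gamma>) / f \<theta>\<bar> \<le> C)"
    and int1: "integrable M (\<lambda>\<theta>. f \<theta> powr (1/\<gamma>) * (\<eta> \<theta> * bd \<theta>) powr ((\<gamma> - 1)/\<gamma>))"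
    and case_Cont: "\<forall>d. k = Cont d \<longrightarrow>
          continuous_map (ctop M d) euclideanreal \<eta> \<and>
          continuous_map (ctop M d) euclideanreal f \<and>
          continuous_map (ctop M d) euclideanreal bd \<and> (\<forall>\<theta>\<in>space M. 0 < bd \<theta>)"
    and case_Lp: "\<forall>p. k = Lp p \<longrightarrow>
          (\<exists>C. AE \<theta> in M. \<eta> \<theta> \<le> C) \<and> (\<exists>C. AE \<theta> in M. f \<theta> \<le> C) \<and>
          integrable M (\<lambda>\<theta>. (f \<theta> / (\<eta> \<theta> * bd \<theta>)) powr (p/\<gamma>))"
    and N_def: "\<forall>z. eq_fn k M (rep (N z)) (\<lambda>\<theta>. \<eta> \<theta> * rep z \<theta>)"
    and Phi_def: "\<forall>x. eq_fn k M (rep (\<Phi> x))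
          (\<lambda>\<theta>. (f \<theta> / (alpha_const M \<eta> f bd \<gamma> \<rho> lam0 * \<eta> \<theta> * bd \<theta>)) powr (1/\<gamma>) * b0 x)"
    and S_gen: "c0_semigroup S" "is_generator S DomL (\<lambda>x. L x - N (\<Phi> x))"
    and x0_pos: "b0 x0 > 0"
  shows "\<forall>t\<ge>0. b0 (S t x0) = b0 x0 * exp (((lam0 - \<rho>) / \<gamma>) * t) \<and> b0 (S t x0) > 0"
proof -
  define c where "c = \<rho> - lam0 * (1 - \<gamma>)"
  define I where "I = (\<integral>\<theta>. f \<theta> powr (1 / \<gamma>) * (\<eta> \<theta> * bd \<theta>) powr ((\<gamma> - 1) / \<gamma>) \<partial>M)"
  define \<alpha> where "\<alpha> = alpha_const M \<eta> f bd \<gamma> \<rho> lam0"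
  have b0_lin: "bounded_linear b0" using b0_pos by (simp add: strictly_positive_functional_def)
  have bd_nonneg: "AE \<theta> in M. 0 \<le> bd \<theta>"
  proof (cases k)
    case (Lp p)
    then show ?thesis using Lp_density_nonneg model b0_pos b0_density by blast
  next
    case (Cont d)
    then show ?thesis using case_Cont by (simp add: AE_I2 less_imp_le)
  qed
  have "0 < I"
    unfolding I_def
    using weighted_root_integral_pos[OF int1 eta_pos f_pos, of b0 rep x0] b0_density(2) x0_pos
    by simp
  then have \<alpha>: "0 < \<alpha>" "\<alpha> powr (1 / \<gamma>) = \<gamma> * I / c"
    unfolding \<alpha>_def I_def c_def using alpha_const_root gamma(1) rho_big by blast+
  have N_Phi: "b0 (N (\<Phi> y)) = c / \<gamma> * b0 y" for y
    using density_functional_N_Phi[OF model b0_density(1) _ bd_nonneg eta_meas eta_pos f_meas f_pos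
        \<alpha>(1), of b0 \<gamma> N \<Phi> y] b0_density(2) N_def Phi_def gamma \<alpha>(2) \<open>0 < I\<close>
    unfolding I_def \<alpha>_def by simp
  have "b0 (L y - N (\<Phi> y)) = (lam0 - \<rho>) / \<gamma> * b0 y" if "y \<in> DomL" for y
    using b0_eigen that gamma(1)
    by (simp add: linear_diff[OF bounded_linear.linear[OF b0_lin]] N_Phi c_def field_simps)
  then have "b0 (S t x0) = b0 x0 * exp ((lam0 - \<rho>) / \<gamma> * t)" if "0 \<le> t" for t
    by (rule c0_semigroup_eigenfunctional[OF S_gen b0_lin _ that])
  then show ?thesis using x0_pos by simp
qed

end
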